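(* Let $n\ge 4$ and let $R(F_n^1)$ be the complex Leibniz algebra with basis $\{h_1,h_2,e_1,\dots,e_n\}$ and nonzero products $[e_i,e_1]=e_{i+1}$ ($2\le i\le n-1$), $[e_1,h_2]=e_1$, $[h_2,e_1]=-e_1$, $[e_i,h_1]=e_i$ ($2\le i\le n$), $[e_i,h_2]=(i-1)e_i$ ($2\le i\le n$). A linear map $D$ on $R(F_n^1)$ is an anti-derivation iff there exist $\beta_1,\dots,\beta_{n+1},\gamma_1,\gamma_2\in\mathbb C$ with $$D(h_1)=\gamma_1h_1+\sum_{i=2}^n\beta_{i+1}e_i,\quad D(h_2)=\gamma_2h_1+\beta_2e_1+\sum_{i=2}^n(i-1)\beta_{i+1}e_i,$$ $$D(e_1)=\beta_1e_1+\sum_{i=3}^n\beta_ie_i,\quad D(e_i)=0\ (2\le i\le n).$$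
   Context: Leibniz algebras are right Leibniz over $\mathbb C$: $[x,[y,z]]=[[x,y],z]-[[x,z],y]$. Unlisted products are zero. An anti-derivation is a linear map $D$ with $D([x,y])=[D(x),y]-[D(y),x]$ for all $x,y$. *)

theory Defs
  imports Complex_Main "HOL-Library.Function_Algebras"
begin

datatype bidx = H1 | H2 | E nat

definition Bset :: "nat \<Rightarrow> bidx set" where
  "Bset n = {H1, H2} \<union> E ` {1..n}"

definition Vsp :: "nat \<Rightarrow> (bidx \<Rightarrow> complex) set" where
  "Vsp n = {v. \<forall>b. b \<notin> Bset n \<longrightarrow> v b = 0}"

definition bv :: "bidx \<Rightarrow> bidx \<Rightarrow> complex" where
  "bv b = (\<lambda>c. if c = b then 1 else 0)"

definition scal :: "complex \<Rightarrow> (bidx \<Rightarrow> complex) \<Rightarrow> bidx \<Rightarrow> complex" where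
  "scal a v = (\<lambda>c. a * v c)"

text \<open>Structure constants: sc n a b c is the coefficient of c in [a,b].\<close>
definition sc :: "nat \<Rightarrow> bidx \<Rightarrow> bidx \<Rightarrow> bidx \<Rightarrow> complex" where
  "sc n a b c =
    (case a of
       E i \<Rightarrow> (case b of
                 E j \<Rightarrow> (if j = 1 \<and> 2 \<le> i \<and> i + 1 \<le> n \<and> c = E (i + 1) then 1 else 0)
               | H1 \<Rightarrow> (if 2 \<le> i \<and> i \<le> n \<and> c = E i then 1 else 0)
               | H2 \<Rightarrow> (if i = 1 \<and> c = E 1 then 1
                        else if 2 \<le> i \<and> i \<le> n \<and> c = E i then of_nat (i - 1) else 0))
     | H2 \<Rightarrow> (case b of
                 E j \<Rightarrow> (if j = 1 \<and> c = E 1 then -1 else 0)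
               | _ \<Rightarrow> 0)
     | H1 \<Rightarrow> 0)"

definition bracket :: "nat \<Rightarrow> (bidx \<Rightarrow> complex) \<Rightarrow> (bidx \<Rightarrow> complex) \<Rightarrow> bidx \<Rightarrow> complex" where
  "bracket n x y = (\<lambda>c. \<Sum>a\<in>Bset n. \<Sum>b\<in>Bset n. x a * y b * sc n a b c)"

definition linear_on :: "nat \<Rightarrow> ((bidx \<Rightarrow> complex) \<Rightarrow> (bidx \<Rightarrow> complex)) \<Rightarrow> bool" where
  "linear_on n D \<longleftrightarrow>
     (\<forall>x\<in>Vsp n. D x \<in> Vsp n) \<and>
     (\<forall>x\<in>Vsp n. \<forall>y\<in>Vsp n. D (x + y) = D x + D y) \<and>
     (\<forall>x\<in>Vsp n. \<forall>a. D (scal a x) = scal a (D x))"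

definition anti_derivation :: "nat \<Rightarrow> ((bidx \<Rightarrow> complex) \<Rightarrow> (bidx \<Rightarrow> complex)) \<Rightarrow> bool" where
  "anti_derivation n D \<longleftrightarrow>
     (\<forall>x\<in>Vsp n. \<forall>y\<in>Vsp n. D (bracket n x y) = bracket n (D x) y - bracket n (D y) x)"

end

theory Submission
  imports Defs
begin

(* Both sides of the anti-derivation identity are bilinear, so it suffices to check it on pairs
   of basis vectors.  Adding the identities for (x, y) and (y, x) shows that D annihilates every
   symmetrised product [x,y] + [y,x]; since [e_i,h_1] + [h_1,e_i] = e_i, D vanishes on e_2, ..., e_n.
   The pairs (h_1,h_2), (h_1,e_1) and (e_1,h_2) then give a linear system for D h_1, D h_2, D e_1
   whose solutions are exactly the stated family.  Conversely, for such D every D[a,b] of basis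
   vectors is a multiple of D e_1, and the identity is checked on basis pairs. *)

lemma sum_fun_apply: "(sum f A) x = (\<Sum>a\<in>A. f a x)"
  by (induction A rule: infinite_finite_induct) auto

lemma finite_Bset [simp]: "finite (Bset n)"
  by (simp add: Bset_def)

lemma sum_Bset: "(\<Sum>b\<in>Bset n. f b) = f H1 + f H2 + (\<Sum>i=1..n. f (E i))"
proof -
  have "Bset n = insert H1 (insert H2 (E ` {1..n}))"
    by (auto simp: Bset_def)
  moreover have "inj_on E {1..n}"
    by (simp add: inj_on_def)
  ultimately show ?thesis
    by (simp add: sum.reindex image_iff add.assoc)
qed

lemma H1_in_Bset: "H1 \<in> Bset n"
  and H2_in_Bset: "H2 \<in> Bset n"
  and E_in_Bset: "1 \<le> i \<Longrightarrow> i \<le> n \<Longrightarrow> E i \<in> Bset n"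
  by (auto simp: Bset_def)

lemma Bset_cases:
  assumes "b \<in> Bset n"
  obtains "b = H1" | "b = H2" | "b = E 1" | i where "b = E i" "2 \<le> i" "i \<le> n"
proof -
  from assms consider "b = H1" | "b = H2" | i where "b = E i" "1 \<le> i" "i \<le> n"
    by (auto simp: Bset_def)
  then show thesis
  proof cases
    case (3 i)
    then show thesis
      using that by (cases "i = 1") auto
  qed (use that in auto)
qed

lemma sum_single_nonzero:
  "finite A \<Longrightarrow> j \<in> A \<Longrightarrow> (\<And>i. i \<in> A \<Longrightarrow> i \<noteq> j \<Longrightarrow> f i = 0) \<Longrightarrow> sum f A = f j"
  by (simp add: sum.remove)

lemma sum_bv_mult: "a \<in> Bset n \<Longrightarrow> (\<Sum>b\<in>Bset n. bv a b * g b) = g a"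
  by (subst sum_single_nonzero[where j = a]) (auto simp: bv_def)

lemma bv_in_Vsp: "b \<in> Bset n \<Longrightarrow> bv b \<in> Vsp n"
  by (auto simp: Vsp_def bv_def)

lemma scal_in_Vsp: "v \<in> Vsp n \<Longrightarrow> scal a v \<in> Vsp n"
  by (auto simp: Vsp_def scal_def)

lemma diff_in_Vsp: "v \<in> Vsp n \<Longrightarrow> w \<in> Vsp n \<Longrightarrow> v - w \<in> Vsp n"
  by (auto simp: Vsp_def)

lemma zero_in_Vsp: "0 \<in> Vsp n"
  by (auto simp: Vsp_def)

lemma Vsp_E_outside:
  assumes "v \<in> Vsp n" and "j = 0 \<or> n < j"
  shows "v (E j) = 0"
proof -
  have "E j \<notin> Bset n"
    using assms(2) by (auto simp: Bset_def)
  then show ?thesis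
    using assms(1) by (simp add: Vsp_def)
qed

lemma scal_zero_left: "scal 0 v = 0"
  by (simp add: fun_eq_iff scal_def)

lemma scal_bv_apply: "scal g (bv b) c = (if c = b then g else 0)"
  by (simp add: scal_def bv_def)

lemma sum_scal_bv_E_apply:
  "finite A \<Longrightarrow> (\<Sum>i\<in>A. scal (f i) (bv (E i))) c = (case c of E j \<Rightarrow> if j \<in> A then f j else 0 | _ \<Rightarrow> 0)"
  by (cases c) (auto simp: sum_fun_apply scal_def bv_def if_distrib cong: if_cong)

lemma Vsp_eq_sum_basis: "x \<in> Vsp n \<Longrightarrow> x = (\<Sum>b\<in>Bset n. scal (x b) (bv b))"
  by (auto simp: fun_eq_iff sum_fun_apply scal_def bv_def Vsp_def if_distrib cong: if_cong)

lemma linear_on_zero: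
  assumes "linear_on n D"
  shows "D 0 = 0"
proof -
  have "D (scal 0 0) = scal 0 (D 0)"
    using assms zero_in_Vsp unfolding linear_on_def by blast
  then show ?thesis
    by (simp add: scal_def zero_fun_def)
qed

lemma sum_in_Vsp: "(\<And>k. k \<in> K \<Longrightarrow> f k \<in> Vsp n) \<Longrightarrow> (\<Sum>k\<in>K. f k) \<in> Vsp n"
  by (simp add: Vsp_def sum_fun_apply)

lemma linear_on_sum:
  assumes "linear_on n D" and "finite K" and "\<And>k. k \<in> K \<Longrightarrow> f k \<in> Vsp n"
  shows "D (\<Sum>k\<in>K. f k) = (\<Sum>k\<in>K. D (f k))"
  using assms(2,3)
proof (induction K rule: finite_induct)
  case empty
  then show ?case
    using linear_on_zero[OF assms(1)] by (simp only: sum.empty)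
next
  case (insert k K)
  have "D (sum f K) = (\<Sum>k\<in>K. D (f k))"
    using insert by simp
  moreover have "D (f k + sum f K) = D (f k) + D (sum f K)"
    using insert assms(1) sum_in_Vsp unfolding linear_on_def by (metis insertCI)
  ultimately show ?case
    by (simp only: sum.insert[OF insert(1,2)])
qed

lemma linear_on_eq_sum_basis:
  assumes "linear_on n D" and "x \<in> Vsp n"
  shows "D x = (\<Sum>b\<in>Bset n. scal (x b) (D (bv b)))"
proof -
  have "D x = (\<Sum>b\<in>Bset n. D (scal (x b) (bv b)))"
    by (subst Vsp_eq_sum_basis[OF assms(2)])
       (simp add: linear_on_sum[OF assms(1)] bv_in_Vsp scal_in_Vsp)
  also have "\<dots> = (\<Sum>b\<in>Bset n. scal (x b) (D (bv b)))"
    using assms(1) bv_in_Vsp unfolding linear_on_def by (intro sum.cong) auto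
  finally show ?thesis .
qed

lemma linear_on_comp: "linear_on n f \<Longrightarrow> linear_on n g \<Longrightarrow> linear_on n (\<lambda>x. f (g x))"
  unfolding linear_on_def by simp

lemma linear_on_diff: "linear_on n f \<Longrightarrow> linear_on n g \<Longrightarrow> linear_on n (\<lambda>x. f x - g x)"
  unfolding linear_on_def by (auto simp: diff_in_Vsp scal_def fun_eq_iff algebra_simps)

lemma bilinear_on_eq_sum_basis:
  assumes left: "\<And>y. y \<in> Vsp n \<Longrightarrow> linear_on n (\<lambda>x. T x y)"
    and right: "\<And>x. x \<in> Vsp n \<Longrightarrow> linear_on n (T x)"
    and "x \<in> Vsp n" "y \<in> Vsp n"
  shows "T x y = (\<Sum>a\<in>Bset n. scal (x a) (\<Sum>b\<in>Bset n. scal (y b) (T (bv a) (bv b))))"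
  using linear_on_eq_sum_basis[OF left, OF \<open>y \<in> Vsp n\<close> \<open>x \<in> Vsp n\<close>]
    linear_on_eq_sum_basis[OF right[OF bv_in_Vsp] \<open>y \<in> Vsp n\<close>] by simp

lemma bilinear_on_eq_on_basis:
  assumes "\<And>y. y \<in> Vsp n \<Longrightarrow> linear_on n (\<lambda>x. S x y)" "\<And>x. x \<in> Vsp n \<Longrightarrow> linear_on n (S x)"
    and "\<And>y. y \<in> Vsp n \<Longrightarrow> linear_on n (\<lambda>x. T x y)" "\<And>x. x \<in> Vsp n \<Longrightarrow> linear_on n (T x)"
    and "\<And>a b. a \<in> Bset n \<Longrightarrow> b \<in> Bset n \<Longrightarrow> S (bv a) (bv b) = T (bv a) (bv b)"
    and "x \<in> Vsp n" "y \<in> Vsp n"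
  shows "S x y = T x y"
  using assms by (simp add: bilinear_on_eq_sum_basis[of n S] bilinear_on_eq_sum_basis[of n T])

(* The hypothesis is needed: the structure constants yield [e_1,h_2] = e_1 even when n = 0. *)
lemma bracket_in_Vsp: "1 \<le> n \<Longrightarrow> bracket n x y \<in> Vsp n"
proof -
  assume "1 \<le> n"
  then have "sc n a b c = 0" if "c \<notin> Bset n" for a b c
    using that by (cases a; cases b; cases c) (auto simp: Bset_def sc_def)
  then show ?thesis
    by (simp add: Vsp_def bracket_def)
qed

lemma bracket_add_left: "bracket n (x + x') y = bracket n x y + bracket n x' y"
  by (simp add: bracket_def fun_eq_iff distrib_right sum.distrib)

lemma bracket_add_right: "bracket n x (y + y') = bracket n x y + bracket n x y'"
  by (simp add: bracket_def fun_eq_iff distrib_left distrib_right sum.distrib)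

lemma bracket_scal_left: "bracket n (scal a x) y = scal a (bracket n x y)"
  by (simp add: bracket_def scal_def fun_eq_iff sum_distrib_left mult.assoc)

lemma bracket_scal_right: "bracket n x (scal a y) = scal a (bracket n x y)"
  by (simp add: bracket_def scal_def fun_eq_iff sum_distrib_left mult.assoc mult.left_commute)

lemma linear_on_bracket_left: "1 \<le> n \<Longrightarrow> linear_on n (\<lambda>x. bracket n x y)"
  by (simp add: linear_on_def bracket_in_Vsp bracket_add_left bracket_scal_left)

lemma linear_on_bracket_right: "1 \<le> n \<Longrightarrow> linear_on n (bracket n x)"
  by (simp add: linear_on_def bracket_in_Vsp bracket_add_right bracket_scal_right)

lemma bracket_zero_left: "bracket n 0 y = 0"
  by (simp add: fun_eq_iff bracket_def)

lemma bracket_bv_right: "b \<in> Bset n \<Longrightarrow> bracket n v (bv b) c = (\<Sum>a\<in>Bset n. v a * sc n a b c)"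
  by (simp add: bracket_def mult.assoc sum_bv_mult flip: sum_distrib_left)

lemma bracket_bv_bv: "a \<in> Bset n \<Longrightarrow> b \<in> Bset n \<Longrightarrow> bracket n (bv a) (bv b) = sc n a b"
  by (simp add: fun_eq_iff bracket_bv_right sum_bv_mult)

lemma anti_derivation_iff_on_basis:
  assumes "linear_on n D" and "1 \<le> n"
  shows "anti_derivation n D \<longleftrightarrow> (\<forall>a\<in>Bset n. \<forall>b\<in>Bset n.
           D (bracket n (bv a) (bv b)) = bracket n (D (bv a)) (bv b) - bracket n (D (bv b)) (bv a))"
proof
  assume "anti_derivation n D"
  then show "\<forall>a\<in>Bset n. \<forall>b\<in>Bset n.
      D (bracket n (bv a) (bv b)) = bracket n (D (bv a)) (bv b) - bracket n (D (bv b)) (bv a)"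
    by (simp add: anti_derivation_def bv_in_Vsp)
next
  assume on_basis: "\<forall>a\<in>Bset n. \<forall>b\<in>Bset n.
      D (bracket n (bv a) (bv b)) = bracket n (D (bv a)) (bv b) - bracket n (D (bv b)) (bv a)"
  have D: "linear_on n D" and left: "\<And>y. linear_on n (\<lambda>x. bracket n x y)"
    and right: "\<And>x. linear_on n (bracket n x)"
    using assms linear_on_bracket_left linear_on_bracket_right by blast+
  show "anti_derivation n D"
    unfolding anti_derivation_def
  proof (intro ballI)
    fix x y
    assume "x \<in> Vsp n" "y \<in> Vsp n"
    then show "D (bracket n x y) = bracket n (D x) y - bracket n (D y) x"
      by (rule bilinear_on_eq_on_basis[of n "\<lambda>x y. D (bracket n x y)"
            "\<lambda>x y. bracket n (D x) y - bracket n (D y) x", rotated 5])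
        (use on_basis in \<open>auto intro: linear_on_comp[OF D left] linear_on_comp[OF D right]
            linear_on_diff[OF linear_on_comp[OF left D] right]
            linear_on_diff[OF right linear_on_comp[OF left D]]\<close>)
  qed
qed

lemma anti_derivation_bracket_symmetric:
  assumes "linear_on n D" "1 \<le> n" "anti_derivation n D" "x \<in> Vsp n" "y \<in> Vsp n"
  shows "D (bracket n x y + bracket n y x) = 0"
proof -
  have "D (bracket n x y + bracket n y x) = D (bracket n x y) + D (bracket n y x)"
    using assms(1,2) bracket_in_Vsp unfolding linear_on_def by blast
  then show ?thesis
    using assms(3-5) unfolding anti_derivation_def by simp
qed

lemma sc_simps [simp]:
  "sc n H1 b c = 0"
  "sc n H2 H1 c = 0"
  "sc n H2 H2 c = 0"
  "sc n H2 (E j) c = (if j = 1 \<and> c = E 1 then -1 else 0)"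
  "sc n (E i) (E j) c = (if j = 1 \<and> 2 \<le> i \<and> i + 1 \<le> n \<and> c = E (i + 1) then 1 else 0)"
  "sc n (E i) H1 c = (if 2 \<le> i \<and> i \<le> n \<and> c = E i then 1 else 0)"
  "sc n (E i) H2 c = (if i = 1 \<and> c = E 1 then 1
                      else if 2 \<le> i \<and> i \<le> n \<and> c = E i then of_nat (i - 1) else 0)"
  by (simp_all add: sc_def)

lemma sc_H1_H2 [simp]: "sc n a b H1 = 0" "sc n a b H2 = 0"
  by (cases a; cases b; simp)+

lemma sc_right_E: "j \<noteq> 1 \<Longrightarrow> sc n a (E j) c = 0"
  by (cases a) simp_all

lemma bracket_right_H1:
  "bracket n v (bv H1) c = (case c of E i \<Rightarrow> if 2 \<le> i \<and> i \<le> n then v (E i) else 0 | _ \<Rightarrow> 0)"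
proof (cases c)
  case (E j)
  show ?thesis
  proof (cases "2 \<le> j \<and> j \<le> n")
    case True
    then show ?thesis
      unfolding bracket_bv_right[OF H1_in_Bset] sum_Bset E
      by (subst sum_single_nonzero[where j = j]) auto
  qed (auto simp: bracket_bv_right H1_in_Bset sum_Bset E intro!: sum.neutral)
qed (auto simp: bracket_bv_right H1_in_Bset sum_Bset)

lemma bracket_right_H2:
  "1 \<le> n \<Longrightarrow> bracket n v (bv H2) c = (case c of E i \<Rightarrow> if i = 1 then v (E 1)
      else if 2 \<le> i \<and> i \<le> n then of_nat (i - 1) * v (E i) else 0 | _ \<Rightarrow> 0)"
proof (cases c)
  case (E j)
  assume "1 \<le> n"
  show ?thesis
  proof (cases "1 \<le> j \<and> j \<le> n")
    case True
    then show ?thesis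
      unfolding bracket_bv_right[OF H2_in_Bset] sum_Bset E
      by (subst sum_single_nonzero[where j = j]) auto
  qed (use \<open>1 \<le> n\<close> in \<open>auto simp: bracket_bv_right H2_in_Bset sum_Bset E
      intro!: sum.neutral\<close>)
qed (auto simp: bracket_bv_right H2_in_Bset sum_Bset)

lemma bracket_right_E1:
  "1 \<le> n \<Longrightarrow> bracket n v (bv (E 1)) c = (case c of E i \<Rightarrow> if i = 1 then - v H2
      else if 3 \<le> i \<and> i \<le> n then v (E (i - 1)) else 0 | _ \<Rightarrow> 0)"
proof (cases c)
  case (E j)
  assume n: "1 \<le> n"
  show ?thesis
  proof (cases "3 \<le> j \<and> j \<le> n")
    case True
    then show ?thesis
      unfolding bracket_bv_right[OF E_in_Bset[OF order_refl n]] sum_Bset E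
      by (subst sum_single_nonzero[where j = "j - 1"]) auto
  qed (use n in \<open>auto simp: bracket_bv_right E_in_Bset sum_Bset E intro!: sum.neutral\<close>)
qed (auto simp: bracket_bv_right E_in_Bset sum_Bset)

lemma bracket_right_E: "j \<noteq> 1 \<Longrightarrow> bracket n v (bv (E j)) = 0"
  by (auto simp: fun_eq_iff bracket_def bv_def sc_right_E intro!: sum.neutral)

lemma bracket_H1_left: "bracket n (bv H1) y = 0"
  by (simp add: fun_eq_iff bracket_def bv_def sum_Bset)

lemma bracket_E1_H2: "1 \<le> n \<Longrightarrow> bracket n (bv (E 1)) (bv H2) = bv (E 1)"
  by (simp add: bracket_bv_bv E_in_Bset H2_in_Bset) (auto simp: fun_eq_iff bv_def)

lemma bracket_E_H1_symmetric:
  "2 \<le> i \<Longrightarrow> i \<le> n \<Longrightarrow> bracket n (bv (E i)) (bv H1) + bracket n (bv H1) (bv (E i)) = bv (E i)"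
  by (simp add: bracket_bv_bv E_in_Bset H1_in_Bset) (auto simp: fun_eq_iff bv_def)

lemma anti_derivation_E_eq_0:
  assumes "linear_on n D" "anti_derivation n D" "2 \<le> i" "i \<le> n"
  shows "D (bv (E i)) = 0"
  using anti_derivation_bracket_symmetric[OF assms(1) _ assms(2), of "bv (E i)" "bv H1"]
    assms(3,4) by (simp add: bracket_E_H1_symmetric bv_in_Vsp E_in_Bset H1_in_Bset)

(* The arguments u, w, v stand for D h1, D h2, D e1. *)

definition anti_derivation_equations ::
    "nat \<Rightarrow> (bidx \<Rightarrow> complex) \<Rightarrow> (bidx \<Rightarrow> complex) \<Rightarrow> (bidx \<Rightarrow> complex) \<Rightarrow> bool" where
  "anti_derivation_equations n u w v \<longleftrightarrow>
     u H2 = 0 \<and> u (E 1) = 0 \<and> w H2 = 0 \<and> v H1 = 0 \<and> v H2 = 0 \<and> v (E 2) = 0 \<and>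
     (\<forall>j\<in>{2..n}. w (E j) = of_nat (j - 1) * u (E j)) \<and>
     (\<forall>j\<in>{3..n}. v (E j) = u (E (j - 1)))"

lemma anti_derivation_imp_equations:
  assumes D: "linear_on n D" and "2 \<le> n" and "anti_derivation n D"
  shows "anti_derivation_equations n (D (bv H1)) (D (bv H2)) (D (bv (E 1)))"
proof -
  have n: "1 \<le> n"
    using \<open>2 \<le> n\<close> by simp
  define u w v where "u = D (bv H1)" and "w = D (bv H2)" and "v = D (bv (E 1))"
  have on_basis: "D (bracket n (bv a) (bv b)) = bracket n (D (bv a)) (bv b) - bracket n (D (bv b)) (bv a)"
    if "a \<in> Bset n" "b \<in> Bset n" for a b
    using that \<open>anti_derivation n D\<close> anti_derivation_iff_on_basis[OF D n] by blast
  have H1_H2: "bracket n u (bv H2) = bracket n w (bv H1)"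
    using on_basis[OF H1_in_Bset H2_in_Bset] linear_on_zero[OF D]
    by (simp add: bracket_H1_left u_def w_def)
  have H1_E1: "bracket n u (bv (E 1)) = bracket n v (bv H1)"
    using on_basis[OF H1_in_Bset E_in_Bset[OF order_refl n]] linear_on_zero[OF D]
    by (simp add: bracket_H1_left u_def v_def)
  have E1_H2: "v = bracket n v (bv H2) - bracket n w (bv (E 1))"
    using on_basis[OF E_in_Bset[OF order_refl n] H2_in_Bset]
    unfolding bracket_E1_H2[OF n] v_def w_def .
  note right = bracket_right_H1 bracket_right_H2[OF n]
    bracket_right_E1[OF n] bracket_right_E1[OF n, unfolded One_nat_def]
  have "u (E 1) = 0"
    using fun_cong[OF H1_H2, of "E 1"] by (simp add: right)
  moreover have "w (E j) = of_nat (j - 1) * u (E j)" if "2 \<le> j" "j \<le> n" for j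
    using fun_cong[OF H1_H2, of "E j"] that by (simp add: right)
  moreover have "u H2 = 0" "v (E 2) = 0"
    using fun_cong[OF H1_E1, of "E 1"] fun_cong[OF H1_E1, of "E 2"] \<open>2 \<le> n\<close>
    by (simp_all add: right)
  moreover have "v (E j) = u (E (j - 1))" if "3 \<le> j" "j \<le> n" for j
    using fun_cong[OF H1_E1, of "E j"] that by (simp add: right)
  moreover have "v H1 = 0" "v H2 = 0" "w H2 = 0"
    using fun_cong[OF E1_H2, of H1] fun_cong[OF E1_H2, of H2] fun_cong[OF E1_H2, of "E 1"]
    by (simp_all add: right)
  ultimately show ?thesis
    unfolding anti_derivation_equations_def u_def[symmetric] w_def[symmetric] v_def[symmetric]
    by auto
qed

lemma anti_derivation_equations_imp_form:
  assumes "u \<in> Vsp n" "w \<in> Vsp n" "v \<in> Vsp n" and eqs: "anti_derivation_equations n u w v"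
  shows "\<exists>(\<beta>::nat \<Rightarrow> complex) \<gamma>1 \<gamma>2.
       u = scal \<gamma>1 (bv H1) + (\<Sum>i=2..n. scal (\<beta> (i + 1)) (bv (E i))) \<and>
       w = scal \<gamma>2 (bv H1) + scal (\<beta> 2) (bv (E 1))
           + (\<Sum>i=2..n. scal (of_nat (i - 1) * \<beta> (i + 1)) (bv (E i))) \<and>
       v = scal (\<beta> 1) (bv (E 1)) + (\<Sum>i=3..n. scal (\<beta> i) (bv (E i)))"
proof -
  define \<beta> where "\<beta> j = (if j = 1 then v (E 1) else if j = 2 then w (E 1) else u (E (j - 1)))" for j
  have outside: "u (E j) = 0" "w (E j) = 0" "v (E j) = 0" if "j = 0 \<or> n < j" for j
    using that assms(1-3) Vsp_E_outside by blast+
  have v_low: "v (E j) = 0" if "j \<noteq> 1" "j < 3" for j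
  proof -
    have "j = 0 \<or> j = 2"
      using that by auto
    then show ?thesis
      using eqs outside(3) unfolding anti_derivation_equations_def by auto
  qed
  have "u = scal (u H1) (bv H1) + (\<Sum>i=2..n. scal (\<beta> (i + 1)) (bv (E i)))"
  proof
    fix c
    show "u c = (scal (u H1) (bv H1) + (\<Sum>i=2..n. scal (\<beta> (i + 1)) (bv (E i)))) c"
      using eqs outside(1) unfolding anti_derivation_equations_def
      by (cases c) (auto simp: sum_scal_bv_E_apply scal_bv_apply \<beta>_def not_le less_2_cases_iff)
  qed
  moreover have "w = scal (w H1) (bv H1) + scal (\<beta> 2) (bv (E 1))
      + (\<Sum>i=2..n. scal (of_nat (i - 1) * \<beta> (i + 1)) (bv (E i)))"
  proof
    fix c
    show "w c = (scal (w H1) (bv H1) + scal (\<beta> 2) (bv (E 1))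
        + (\<Sum>i=2..n. scal (of_nat (i - 1) * \<beta> (i + 1)) (bv (E i)))) c"
      using eqs outside(2) unfolding anti_derivation_equations_def
      by (cases c) (auto simp: sum_scal_bv_E_apply scal_bv_apply \<beta>_def)
  qed
  moreover have "v = scal (\<beta> 1) (bv (E 1)) + (\<Sum>i=3..n. scal (\<beta> i) (bv (E i)))"
  proof
    fix c
    show "v c = (scal (\<beta> 1) (bv (E 1)) + (\<Sum>i=3..n. scal (\<beta> i) (bv (E i)))) c"
      using eqs v_low outside(3) unfolding anti_derivation_equations_def
      by (cases c) (auto simp: sum_scal_bv_E_apply scal_bv_apply \<beta>_def not_le)
  qed
  ultimately show ?thesis
    by blast
qed

lemma D_bracket_bv_bv:
  assumes D: "linear_on n D" and n: "1 \<le> n" and E: "\<forall>i\<in>{2..n}. D (bv (E i)) = 0"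
    and "a \<in> Bset n" "b \<in> Bset n"
  shows "D (bracket n (bv a) (bv b)) = scal (sc n a b (E 1)) (D (bv (E 1)))"
proof -
  have "(\<Sum>i=1..n. scal (sc n a b (E i)) (D (bv (E i)))) = scal (sc n a b (E 1)) (D (bv (E 1)))"
    using n E by (intro sum_single_nonzero) (auto simp: scal_def fun_eq_iff)
  moreover have "D (sc n a b) = (\<Sum>k\<in>Bset n. scal (sc n a b k) (D (bv k)))"
    using linear_on_eq_sum_basis[OF D bracket_in_Vsp[OF n], of "bv a" "bv b"]
    unfolding bracket_bv_bv[OF assms(4,5)] .
  ultimately show ?thesis
    by (simp add: bracket_bv_bv[OF assms(4,5)] sum_Bset scal_zero_left)
qed

lemma form_imp_anti_derivation:
  assumes D: "linear_on n D" and n: "1 \<le> n"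
    and h1: "D (bv H1) = scal \<gamma>1 (bv H1) + (\<Sum>i=2..n. scal (\<beta> (i + 1)) (bv (E i)))"
    and h2: "D (bv H2) = scal \<gamma>2 (bv H1) + scal (\<beta> 2) (bv (E 1))
                   + (\<Sum>i=2..n. scal (of_nat (i - 1) * \<beta> (i + 1)) (bv (E i)))"
    and e1: "D (bv (E 1)) = scal (\<beta> 1) (bv (E 1)) + (\<Sum>i=3..n. scal (\<beta> i) (bv (E i)))"
    and E: "\<forall>i\<in>{2..n}. D (bv (E i)) = 0"
  shows "anti_derivation n D"
proof -
  have u: "D (bv H1) c = (case c of H1 \<Rightarrow> \<gamma>1 | H2 \<Rightarrow> 0
      | E j \<Rightarrow> if 2 \<le> j \<and> j \<le> n then \<beta> (j + 1) else 0)" for c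
    unfolding h1 by (cases c) (auto simp: sum_scal_bv_E_apply scal_bv_apply)
  have w: "D (bv H2) c = (case c of H1 \<Rightarrow> \<gamma>2 | H2 \<Rightarrow> 0 | E j \<Rightarrow> if j = 1 then \<beta> 2
      else if 2 \<le> j \<and> j \<le> n then of_nat (j - 1) * \<beta> (j + 1) else 0)" for c
    unfolding h2 by (cases c) (auto simp: sum_scal_bv_E_apply scal_bv_apply)
  have v: "D (bv (E 1)) c = (case c of E j \<Rightarrow> if j = 1 then \<beta> 1
      else if 3 \<le> j \<and> j \<le> n then \<beta> j else 0 | _ \<Rightarrow> 0)" for c
    unfolding e1 by (cases c) (auto simp: sum_scal_bv_E_apply scal_bv_apply)
  note right = bracket_right_H1 bracket_right_H2[OF n]
    bracket_right_E1[OF n] bracket_right_E1[OF n, unfolded One_nat_def]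
  have "D (bracket n (bv a) (bv b)) = bracket n (D (bv a)) (bv b) - bracket n (D (bv b)) (bv a)"
    if ab: "a \<in> Bset n" "b \<in> Bset n" for a b
  proof -
    consider "a \<in> {H1, H2, E 1}" "b \<in> {H1, H2, E 1}"
      | i where "a = E i" "2 \<le> i" "i \<le> n"
      | i where "b = E i" "2 \<le> i" "i \<le> n"
      using Bset_cases[OF ab(1)] Bset_cases[OF ab(2)] by blast
    then show ?thesis
    proof cases
      case 1
      then show ?thesis
        by (auto simp: D_bracket_bv_bv[OF D n E ab] fun_eq_iff right scal_def u w v
            v[unfolded One_nat_def] split: bidx.split) (auto simp: algebra_simps)
    next
      case 2
      then show ?thesis
        using E D_bracket_bv_bv[OF D n E ab]
        by (cases b) (auto simp: bracket_zero_left bracket_right_E scal_zero_left)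
    next
      case 3
      then show ?thesis
        using E D_bracket_bv_bv[OF D n E ab] linear_on_zero[OF D]
        by (cases a) (auto simp: bracket_zero_left bracket_right_E scal_zero_left)
    qed
  qed
  then show ?thesis
    using anti_derivation_iff_on_basis[OF D n] by blast
qed

theorem mainTheorem10:
  fixes n :: nat and D :: "(bidx \<Rightarrow> complex) \<Rightarrow> (bidx \<Rightarrow> complex)"
  assumes "n \<ge> 4" and "linear_on n D"
  shows "anti_derivation n D \<longleftrightarrow>
    (\<exists>(\<beta>::nat \<Rightarrow> complex) \<gamma>1 \<gamma>2.
       D (bv H1) = scal \<gamma>1 (bv H1) + (\<Sum>i=2..n. scal (\<beta> (i + 1)) (bv (E i))) \<and>
       D (bv H2) = scal \<gamma>2 (bv H1) + scal (\<beta> 2) (bv (E 1))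
                   + (\<Sum>i=2..n. scal (of_nat (i - 1) * \<beta> (i + 1)) (bv (E i))) \<and>
       D (bv (E 1)) = scal (\<beta> 1) (bv (E 1)) + (\<Sum>i=3..n. scal (\<beta> i) (bv (E i))) \<and>
       (\<forall>i\<in>{2..n}. D (bv (E i)) = 0))"
proof -
  have n: "2 \<le> n" "1 \<le> n"
    using assms(1) by simp_all
  have Vsp: "D (bv b) \<in> Vsp n" if "b \<in> Bset n" for b
    using assms(2) bv_in_Vsp[OF that] unfolding linear_on_def by blast
  have "anti_derivation_equations n (D (bv H1)) (D (bv H2)) (D (bv (E 1)))"
    and "\<forall>i\<in>{2..n}. D (bv (E i)) = 0"
    if "anti_derivation n D"
    using that anti_derivation_imp_equations[OF assms(2) n(1)] anti_derivation_E_eq_0[OF assms(2)]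
    by auto
  then show ?thesis
    using anti_derivation_equations_imp_form[OF Vsp Vsp Vsp] form_imp_anti_derivation[OF assms(2) n(2)]
      H1_in_Bset H2_in_Bset E_in_Bset[OF order_refl n(2)]
    by blast
qed

end
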